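(* Let $n>2k$ and $1\le s\le k$. Then $g(n,k,s)=|\mathcal K(n,k,s)|$, where $$\mathcal K(n,k,s)=\Big\{K\in\binom{[n]}{k}:1\in K,\ |K\cap[2,k+s-1]|\ge s-1\Big\}\cup\binom{[2,k+s-1]}{k}.$$
   Context: $[a,b]=\{a,\dots,b\}$. A family is intersecting if any two members intersect. $\tau(\mathcal F)$ is the minimum size of a set meeting every member of $\mathcal F$. Writing sets increasingly, $(a_1,\dots,a_k)\prec(b_1,\dots,b_k)$ iff $a_i\le b_i$ for all $i$; $\mathcal F\subset\binom{[n]}{k}$ is initial if $A\prec B\in\mathcal F$ implies $A\in\mathcal F$. $g(n,k,s)=\max\{|\mathcal F|:\mathcal F\subset\binom{[n]}{k}\text{ intersecting, initial, }\tau(\mathcal F)\ge s\}$. *)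

theory Defs
  imports Main
begin

definition ksets :: "nat set \<Rightarrow> nat \<Rightarrow> nat set set" where
  "ksets X k = {A. A \<subseteq> X \<and> card A = k}"

definition intersecting :: "nat set set \<Rightarrow> bool" where
  "intersecting F \<longleftrightarrow> (\<forall>A\<in>F. \<forall>B\<in>F. A \<inter> B \<noteq> {})"

definition tau :: "nat \<Rightarrow> nat set set \<Rightarrow> nat" where
  "tau n F = Inf {card T | T. T \<subseteq> {1..n} \<and> (\<forall>A\<in>F. T \<inter> A \<noteq> {})}"

definition shift_le :: "nat set \<Rightarrow> nat set \<Rightarrow> bool" where
  "shift_le A B \<longleftrightarrow> card A = card B \<and>
     (\<forall>i < card A. sorted_list_of_set A ! i \<le> sorted_list_of_set B ! i)"

definition initial :: "nat \<Rightarrow> nat \<Rightarrow> nat set set \<Rightarrow> bool" where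
  "initial n k F \<longleftrightarrow> (\<forall>A\<in>ksets {1..n} k. \<forall>B\<in>F. shift_le A B \<longrightarrow> A \<in> F)"

definition g :: "nat \<Rightarrow> nat \<Rightarrow> nat \<Rightarrow> nat" where
  "g n k s = Max {card F | F. F \<subseteq> ksets {1..n} k \<and> intersecting F \<and> initial n k F
                              \<and> tau n F \<ge> s}"

definition Kfam :: "nat \<Rightarrow> nat \<Rightarrow> nat \<Rightarrow> nat set set" where
  "Kfam n k s = {K \<in> ksets {1..n} k. 1 \<in> K \<and> card (K \<inter> {2..k+s-1}) \<ge> s - 1}
                \<union> ksets {2..k+s-1} k"

end

theory Submission
  imports Defs
begin

text \<open>Shifted families are exactly the down-sets of the counting order
  \<open>|B \<inter> [1,t]| \<le> |A \<inter> [1,t]|\<close>. If \<open>\<tau>(F) \<ge> s\<close>, some member avoids \<open>[1,s-1]\<close>, so its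
  shift \<open>[s,k+s-1]\<close> is a member, and then every member meets \<open>[1,k+s-1]\<close> in at least \<open>s\<close>
  points. Intersecting shifted families with this property are bounded by induction on \<open>n\<close>:
  the members avoiding \<open>n\<close> and the traces of the members containing \<open>n\<close> are again
  intersecting and shifted on \<open>[n-1]\<close>, and at \<open>n = 2k\<close> complementation bounds \<open>|F|\<close> by the
  size of any family containing one set of each complementary pair met by \<open>F\<close>. Finally
  \<open>\<K>(n,k,s)\<close> itself is intersecting, shifted and has covering number at least \<open>s\<close>.\<close>

lemma sorted_list_of_set_nth_le_iff:
  assumes "finite X" "i < card X"
  shows "sorted_list_of_set X ! i \<le> t \<longleftrightarrow> i < card (X \<inter> {..t})"
proof -
  define xs where "xs = sorted_list_of_set X"
  have len: "length xs = card X" using assms by (simp add: xs_def)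
  have srt: "sorted xs" and dst: "distinct xs" and st: "set xs = X"
    using assms by (simp_all add: xs_def)
  show ?thesis unfolding xs_def[symmetric]
  proof
    assume le: "xs ! i \<le> t"
    have sub: "(\<lambda>j. xs ! j) ` {..i} \<subseteq> X \<inter> {..t}"
    proof
      fix y assume "y \<in> (\<lambda>j. xs ! j) ` {..i}"
      then obtain j where j: "j \<le> i" "y = xs ! j" by auto
      have "xs ! j \<le> xs ! i" using srt j assms len by (simp add: sorted_nth_mono)
      moreover have "xs ! j \<in> X" using st j assms len by (metis le_less_trans nth_mem)
      ultimately show "y \<in> X \<inter> {..t}" using j le by auto
    qed
    have inj: "inj_on (\<lambda>j. xs ! j) {..i}"
      using dst assms len by (auto simp: inj_on_def nth_eq_iff_index_eq)
    have "card ((\<lambda>j. xs ! j) ` {..i}) = Suc i" using inj by (simp add: card_image)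
    moreover have "card ((\<lambda>j. xs ! j) ` {..i}) \<le> card (X \<inter> {..t})"
      using sub assms by (intro card_mono) auto
    ultimately show "i < card (X \<inter> {..t})" by simp
  next
    assume lt: "i < card (X \<inter> {..t})"
    show "xs ! i \<le> t"
    proof (rule ccontr)
      assume "\<not> xs ! i \<le> t"
      hence gt: "t < xs ! i" by simp
      have "X \<inter> {..t} \<subseteq> (\<lambda>j. xs ! j) ` {..<i}"
      proof
        fix y assume y: "y \<in> X \<inter> {..t}"
        then obtain j where j: "j < length xs" "y = xs ! j" using st by (metis IntD1 in_set_conv_nth)
        have "j < i"
        proof (rule ccontr)
          assume "\<not> j < i"
          hence "xs ! i \<le> xs ! j" using srt j by (simp add: sorted_nth_mono)
          thus False using gt y j by auto
        qed
        thus "y \<in> (\<lambda>j. xs ! j) ` {..<i}" using j by auto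
      qed
      hence "card (X \<inter> {..t}) \<le> card ((\<lambda>j. xs ! j) ` {..<i})" by (intro card_mono) auto
      also have "\<dots> \<le> i" using card_image_le[of "{..<i}" "\<lambda>j. xs ! j"] by simp
      finally show False using lt by simp
    qed
  qed
qed

definition shift_below :: "nat set \<Rightarrow> nat set \<Rightarrow> bool" where
  "shift_below A B \<longleftrightarrow> card A = card B \<and> (\<forall>t. card (B \<inter> {..t}) \<le> card (A \<inter> {..t}))"

lemma shift_le_iff_shift_below:
  assumes "finite A" "finite B"
  shows "shift_le A B \<longleftrightarrow> shift_below A B"
proof
  assume h: "shift_le A B"
  hence c: "card A = card B" by (simp add: shift_le_def)
  show "shift_below A B" unfolding shift_below_def
  proof (intro conjI allI c)
    fix t
    show "card (B \<inter> {..t}) \<le> card (A \<inter> {..t})"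
    proof (cases "card (B \<inter> {..t})")
      case (Suc i)
      have "card (B \<inter> {..t}) \<le> card B" using assms by (intro card_mono) auto
      hence i: "i < card B" using Suc by simp
      hence "sorted_list_of_set B ! i \<le> t"
        using sorted_list_of_set_nth_le_iff[OF assms(2)] Suc by simp
      moreover have "sorted_list_of_set A ! i \<le> sorted_list_of_set B ! i"
        using h i c by (simp add: shift_le_def)
      ultimately have "i < card (A \<inter> {..t})"
        using sorted_list_of_set_nth_le_iff[OF assms(1), of i t] i c by simp
      thus ?thesis using Suc by simp
    qed simp
  qed
next
  assume h: "shift_below A B"
  hence c: "card A = card B" by (simp add: shift_below_def)
  show "shift_le A B" unfolding shift_le_def
  proof (intro conjI allI impI c)
    fix i assume i: "i < card A"
    define t where "t = sorted_list_of_set B ! i"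
    have "i < card (B \<inter> {..t})"
      using sorted_list_of_set_nth_le_iff[OF assms(2), of i t] i c by (simp add: t_def)
    also have "\<dots> \<le> card (A \<inter> {..t})" using h by (simp add: shift_below_def)
    finally show "sorted_list_of_set A ! i \<le> sorted_list_of_set B ! i"
      using sorted_list_of_set_nth_le_iff[OF assms(1), of i t] i by (simp add: t_def)
  qed
qed

definition shift_closed :: "nat \<Rightarrow> nat \<Rightarrow> nat set set \<Rightarrow> bool" where
  "shift_closed n k F \<longleftrightarrow> (\<forall>A\<in>ksets {1..n} k. \<forall>B\<in>F. shift_below A B \<longrightarrow> A \<in> F)"

lemma finite_of_ksets: "A \<in> ksets {1..n} k \<Longrightarrow> finite A"
  by (auto simp: ksets_def intro: finite_subset)

lemma finite_ksets: "finite (ksets {a..b} k)"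
  by (rule finite_subset[of _ "Pow {a..b}"]) (auto simp: ksets_def)

lemma initial_iff_shift_closed:
  "F \<subseteq> ksets {1..n} k \<Longrightarrow> initial n k F \<longleftrightarrow> shift_closed n k F"
  unfolding initial_def shift_closed_def using shift_le_iff_shift_below finite_of_ksets by blast

lemma shift_below_insert:
  assumes "shift_below A B" "finite A" "finite B" "x \<notin> A" "x \<notin> B"
  shows "shift_below (insert x A) (insert x B)"
  unfolding shift_below_def
proof (intro conjI allI)
  fix t
  have "card (B \<inter> {..t}) \<le> card (A \<inter> {..t})" using assms by (simp add: shift_below_def)
  thus "card (insert x B \<inter> {..t}) \<le> card (insert x A \<inter> {..t})"
    using assms by (cases "x \<le> t") auto
qed (use assms in \<open>simp add: shift_below_def\<close>)

lemma shift_below_replace: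
  assumes "finite G" "x \<notin> G" "y \<notin> G" "x \<le> y"
  shows "shift_below (insert x G) (insert y G)"
  unfolding shift_below_def
proof (intro conjI allI)
  fix t
  show "card (insert y G \<inter> {..t}) \<le> card (insert x G \<inter> {..t})"
    using assms by (cases "y \<le> t"; cases "x \<le> t") auto
qed (use assms in simp)

lemma card_inter_atMost_ge:
  fixes D :: "nat set"
  assumes "D \<subseteq> {..m}"
  shows "card D - (m - t) \<le> card (D \<inter> {..t})"
proof -
  have fin: "finite D" using assms finite_subset by blast
  have "D - {..t} \<subseteq> {t<..m}" using assms by auto
  hence "card (D - {..t}) \<le> m - t" using card_mono[of "{t<..m}"] by fastforce
  moreover have "card D = card (D \<inter> {..t}) + card (D - {..t})"
    using fin by (metis Int_Diff_Un Int_Diff_disjoint card_Un_disjoint finite_Diff finite_Int)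
  ultimately show ?thesis by linarith
qed

lemma shift_below_interval_left:
  assumes "finite A" "A \<subseteq> {a..}" "card A = card {a..m}"
  shows "shift_below {a..m} A"
  unfolding shift_below_def
proof (intro conjI allI)
  fix t
  show "card (A \<inter> {..t}) \<le> card ({a..m} \<inter> {..t})"
  proof (cases "t \<le> m")
    case True
    hence "A \<inter> {..t} \<subseteq> {a..m} \<inter> {..t}" using assms(2) by auto
    thus ?thesis by (intro card_mono) auto
  next
    case False
    hence eq: "{a..m} \<inter> {..t} = {a..m}" by auto
    have "card (A \<inter> {..t}) \<le> card A" using assms(1) by (intro card_mono) auto
    thus ?thesis unfolding eq using assms(3) by linarith
  qed
qed (use assms in simp)

lemma shift_below_interval_right:
  assumes "D \<subseteq> {..m}" "card D = card {a..m}"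
  shows "shift_below D {a..m}"
  unfolding shift_below_def
proof (intro conjI allI)
  fix t
  show "card ({a..m} \<inter> {..t}) \<le> card (D \<inter> {..t})"
  proof (cases "t \<le> m")
    case True
    have "card ({a..m} \<inter> {..t}) = Suc t - a" using True by (simp add: min_absorb2)
    moreover have "card D = Suc m - a" using assms(2) by simp
    ultimately have "card ({a..m} \<inter> {..t}) \<le> card D - (m - t)" using True by linarith
    thus ?thesis using card_inter_atMost_ge[OF assms(1)] by (rule order_trans)
  next
    case False
    hence eq: "D \<inter> {..t} = D" using assms(1) by auto
    have "card ({a..m} \<inter> {..t}) \<le> card {a..m}" by (intro card_mono) auto
    thus ?thesis unfolding eq using assms(2) by linarith
  qed
qed (use assms in simp)

definition avoid :: "nat set set \<Rightarrow> nat \<Rightarrow> nat set set" where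
  "avoid F x = {A \<in> F. x \<notin> A}"

definition link :: "nat set set \<Rightarrow> nat \<Rightarrow> nat set set" where
  "link F x = (\<lambda>A. A - {x}) ` {A \<in> F. x \<in> A}"

lemma card_avoid_link:
  assumes "finite F"
  shows "card F = card (avoid F x) + card (link F x)"
proof -
  have "inj_on (\<lambda>A. A - {x}) {A \<in> F. x \<in> A}" by (auto simp: inj_on_def)
  hence "card (link F x) = card {A \<in> F. x \<in> A}" unfolding link_def by (rule card_image)
  moreover have "card F = card (avoid F x) + card {A \<in> F. x \<in> A}"
    unfolding avoid_def using assms by (subst card_Un_disjoint[symmetric]) (auto intro: arg_cong[where f=card])
  ultimately show ?thesis by simp
qed

lemma insert_mem_link: "B \<in> link F x \<Longrightarrow> insert x B \<in> F \<and> x \<notin> B"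
  by (auto simp: link_def insert_absorb)

lemma mem_ksets_pred_iff:
  fixes n :: nat
  shows "A \<in> ksets {1..n-1} k \<longleftrightarrow> A \<in> ksets {1..n} k \<and> n \<notin> A"
proof
  assume A: "A \<in> ksets {1..n-1} k"
  have "{1..n-1} \<subseteq> {1..n}" "n \<notin> {1..n-1}" by auto
  thus "A \<in> ksets {1..n} k \<and> n \<notin> A" using A unfolding ksets_def by blast
next
  assume A: "A \<in> ksets {1..n} k \<and> n \<notin> A"
  have "A \<subseteq> {1..n-1}"
  proof
    fix x assume "x \<in> A"
    hence "x \<in> {1..n}" "x \<noteq> n" using A by (auto simp: ksets_def)
    thus "x \<in> {1..n-1}" by auto
  qed
  thus "A \<in> ksets {1..n-1} k" using A by (simp add: ksets_def)
qed

lemma avoid_last_subset_ksets: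
  "F \<subseteq> ksets {1..n} k \<Longrightarrow> avoid F n \<subseteq> ksets {1..n-1} k"
  using mem_ksets_pred_iff[of _ n k] unfolding avoid_def by blast

lemma link_last_subset_ksets:
  assumes "F \<subseteq> ksets {1..n} k"
  shows "link F n \<subseteq> ksets {1..n-1} (k-1)"
proof
  fix B assume "B \<in> link F n"
  then obtain A where A: "A \<in> F" "n \<in> A" "B = A - {n}" by (auto simp: link_def)
  hence "A \<subseteq> {1..n}" "card A = k" "finite A"
    using assms by (auto simp: ksets_def intro: finite_subset)
  hence "B \<in> ksets {1..n} (k-1)" using A by (auto simp: ksets_def)
  thus "B \<in> ksets {1..n-1} (k-1)" using A unfolding mem_ksets_pred_iff by blast
qed

lemma shift_closed_avoid_last:
  "shift_closed n k F \<Longrightarrow> shift_closed (n-1) k (avoid F n)"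
  using mem_ksets_pred_iff[of _ n k] unfolding shift_closed_def avoid_def by blast

lemma shift_closed_link_last:
  assumes "F \<subseteq> ksets {1..n} k" "shift_closed n k F" "k \<ge> 1"
  shows "shift_closed (n-1) (k-1) (link F n)"
  unfolding shift_closed_def
proof (intro ballI impI)
  fix A B assume A: "A \<in> ksets {1..n-1} (k-1)" and B: "B \<in> link F n" and "shift_below A B"
  have "A \<in> ksets {1..n} (k-1)" and nA: "n \<notin> A" using A unfolding mem_ksets_pred_iff by blast+
  hence An: "A \<subseteq> {1..n}" "card A = k - 1" and fA: "finite A"
    by (auto simp: ksets_def intro: finite_subset)
  have "finite B" using B link_last_subset_ksets[OF assms(1)] finite_of_ksets by blast
  hence "shift_below (insert n A) (insert n B)"
    using shift_below_insert \<open>shift_below A B\<close> fA nA insert_mem_link[OF B] by blast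
  moreover have "insert n A \<in> ksets {1..n} k"
  proof -
    have "n \<ge> 1" using insert_mem_link[OF B] assms(1) by (auto simp: ksets_def)
    thus ?thesis using An nA fA assms(3) by (simp add: ksets_def)
  qed
  ultimately have "insert n A \<in> F"
    using assms(2) insert_mem_link[OF B] by (auto simp: shift_closed_def)
  thus "A \<in> link F n" unfolding link_def using nA by (auto intro!: image_eqI[where x="insert n A"])
qed

lemma intersecting_avoid: "intersecting F \<Longrightarrow> intersecting (avoid F x)"
  by (auto simp: intersecting_def avoid_def)

text \<open>Two disjoint traces \<open>G, G'\<close> leave room in \<open>[n-1]\<close>, as \<open>n > 2k-2\<close>, for a point \<open>x\<close>;
  then \<open>G' \<union> {x}\<close> is a shift of \<open>G' \<union> {n}\<close> disjoint from \<open>G \<union> {n}\<close>.\<close>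
lemma intersecting_link_last:
  assumes "F \<subseteq> ksets {1..n} k" "shift_closed n k F" "intersecting F" "k \<ge> 1" "2*k \<le> n"
  shows "intersecting (link F n)"
  unfolding intersecting_def
proof (intro ballI notI)
  fix G G' assume G: "G \<in> link F n" and G': "G' \<in> link F n" and disj: "G \<inter> G' = {}"
  have kG: "G \<in> ksets {1..n-1} (k-1)" "G' \<in> ksets {1..n-1} (k-1)"
    using G G' link_last_subset_ksets[OF assms(1)] by auto
  have "card (G \<union> G') < card {1..n-1}"
    using card_Un_le[of G G'] kG assms(4,5) by (auto simp: ksets_def)
  hence "\<not> {1..n-1} \<subseteq> G \<union> G'"
    using card_mono[of "G \<union> G'" "{1..n-1}"] kG finite_of_ksets by auto
  then obtain x where x: "x \<in> {1..n-1}" "x \<notin> G" "x \<notin> G'" by blast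
  have "G' \<in> ksets {1..n} (k-1)" "n \<notin> G'" using kG(2) unfolding mem_ksets_pred_iff by blast+
  hence G'n: "G' \<subseteq> {1..n}" "card G' = k - 1" by (simp_all add: ksets_def)
  have "finite G'" using kG(2) by (rule finite_of_ksets)
  have "x \<le> n" "x \<ge> 1" using x(1) by auto
  hence "shift_below (insert x G') (insert n G')"
    using shift_below_replace[OF \<open>finite G'\<close> x(3) \<open>n \<notin> G'\<close>] by blast
  moreover have "insert x G' \<in> ksets {1..n} k"
    using G'n x(3) \<open>finite G'\<close> assms(4) \<open>x \<le> n\<close> \<open>x \<ge> 1\<close> by (simp add: ksets_def)
  ultimately have "insert x G' \<in> F"
    using assms(2) insert_mem_link[OF G'] by (auto simp: shift_closed_def)
  moreover have "insert n G \<inter> insert x G' = {}" using disj x insert_mem_link[OF G] insert_mem_link[OF G'] by auto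
  ultimately show False using assms(3) insert_mem_link[OF G] unfolding intersecting_def by blast
qed

text \<open>At \<open>n = 2k\<close> an intersecting family contains at most one set of each complementary pair.\<close>
lemma card_le_by_complement:
  assumes "finite G" "intersecting F" "F \<subseteq> Pow X"
    and "\<And>A. A \<in> F \<Longrightarrow> A \<notin> G \<Longrightarrow> X - A \<in> G"
  shows "card F \<le> card G"
proof -
  define \<psi> where "\<psi> A = (if A \<in> G then A else X - A)" for A
  have "inj_on \<psi> F"
  proof (rule inj_onI)
    fix A B assume A: "A \<in> F" and B: "B \<in> F" and eq: "\<psi> A = \<psi> B"
    have "A \<inter> B \<noteq> {}" using A B assms(2) by (auto simp: intersecting_def)
    moreover have "A \<subseteq> X" "B \<subseteq> X" using A B assms(3) by auto
    ultimately show "A = B" using eq by (auto simp: \<psi>_def split: if_splits)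
  qed
  moreover have "\<psi> ` F \<subseteq> G" using assms(4) by (auto simp: \<psi>_def)
  ultimately show ?thesis using assms(1) by (rule card_inj_on_le)
qed

text \<open>For \<open>m = k+s-1\<close> this is the first part of \<open>\<K>(n,k,s)\<close>; for \<open>m \<ge> k+s\<close> it is the
  extremal family for the traces \<open>link F n\<close> arising in the induction.\<close>
definition heavy_star :: "nat \<Rightarrow> nat \<Rightarrow> nat \<Rightarrow> nat \<Rightarrow> nat set set" where
  "heavy_star n k m s = {A \<in> ksets {1..n} k. 1 \<in> A \<and> s \<le> card (A \<inter> {1..m})}"

lemma finite_heavy_star: "finite (heavy_star n k m s)"
  by (rule finite_subset[OF _ finite_ksets]) (auto simp: heavy_star_def)

lemma intersecting_ksets_0_eq_empty:
  assumes "intersecting F" "F \<subseteq> ksets {1..n} 0"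
  shows "F = {}"
proof (rule ccontr)
  assume "F \<noteq> {}"
  then obtain A where A: "A \<in> F" by blast
  hence "A \<in> ksets {1..n} 0" using assms(2) by blast
  hence "finite A" "card A = 0" by (rule finite_of_ksets, simp add: ksets_def)
  hence "A = {}" by simp
  thus False using A assms(1) by (auto simp: intersecting_def)
qed

lemma card_inter_insert_atLeastAtMost:
  fixes x :: nat
  assumes "finite B" "x \<notin> B" "x \<ge> 1"
  shows "card (insert x B \<inter> {1..m}) = (if x \<le> m then Suc (card (B \<inter> {1..m})) else card (B \<inter> {1..m}))"
proof (cases "x \<le> m")
  case True
  hence "insert x B \<inter> {1..m} = insert x (B \<inter> {1..m})" using assms by auto
  thus ?thesis using True assms by simp
qed auto

lemma card_inter_link_ge:
  fixes x :: nat
  assumes "\<forall>A\<in>F. finite A \<and> s \<le> card (A \<inter> {1..m})" "B \<in> link F x" "x \<ge> 1"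
  shows "(if x \<le> m then s - 1 else s) \<le> card (B \<inter> {1..m})"
proof -
  have "insert x B \<in> F" "x \<notin> B" using insert_mem_link[OF assms(2)] by simp_all
  moreover have "finite B" using bspec[OF assms(1) \<open>insert x B \<in> F\<close>] by simp
  ultimately show ?thesis
    using assms(1,3) card_inter_insert_atLeastAtMost[of B x m] by (auto split: if_splits)
qed

lemma avoid_heavy_star_last:
  "avoid (heavy_star n k m s) n = heavy_star (n-1) k m s"
  using mem_ksets_pred_iff[of _ n k] unfolding avoid_def heavy_star_def by blast

lemma link_heavy_star_last:
  assumes "n \<ge> 2" "k \<ge> 1"
  shows "link (heavy_star n k m s) n = heavy_star (n-1) (k-1) m (if n \<le> m then s - 1 else s)"
    (is "_ = heavy_star _ _ _ ?s'")
proof (intro equalityI subsetI)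
  fix B assume B: "B \<in> link (heavy_star n k m s) n"
  have "heavy_star n k m s \<subseteq> ksets {1..n} k" by (auto simp: heavy_star_def)
  hence "B \<in> ksets {1..n-1} (k-1)" using B link_last_subset_ksets by blast
  moreover have "1 \<in> B" using insert_mem_link[OF B] assms(1) by (auto simp: heavy_star_def)
  moreover have "\<forall>A\<in>heavy_star n k m s. finite A \<and> s \<le> card (A \<inter> {1..m})"
    unfolding heavy_star_def using finite_of_ksets by blast
  hence "?s' \<le> card (B \<inter> {1..m})" using card_inter_link_ge[OF _ B] assms(1) by simp
  ultimately show "B \<in> heavy_star (n-1) (k-1) m ?s'" by (simp add: heavy_star_def)
next
  fix B assume B: "B \<in> heavy_star (n-1) (k-1) m ?s'"
  hence Bk: "B \<in> ksets {1..n} (k-1)" "n \<notin> B"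
    using mem_ksets_pred_iff[of B n "k-1"] by (auto simp: heavy_star_def)
  hence "finite B" "B \<subseteq> {1..n}" "card B = k - 1" by (auto simp: ksets_def intro: finite_subset)
  hence "insert n B \<in> ksets {1..n} k" using Bk(2) assms by (simp add: ksets_def)
  moreover have "s \<le> card (insert n B \<inter> {1..m})"
    using B card_inter_insert_atLeastAtMost[OF \<open>finite B\<close> Bk(2)] assms(1)
    by (auto simp: heavy_star_def split: if_splits)
  ultimately have "insert n B \<in> heavy_star n k m s" using B by (simp add: heavy_star_def)
  thus "B \<in> link (heavy_star n k m s) n"
    unfolding link_def using Bk(2) by (auto intro!: image_eqI[where x="insert n B"])
qed

lemma card_heavy_star_last:
  assumes "n \<ge> 2" "k \<ge> 1"
  shows "card (heavy_star n k m s)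
    = card (heavy_star (n-1) k m s) + card (heavy_star (n-1) (k-1) m (if n \<le> m then s - 1 else s))"
  using card_avoid_link[OF finite_heavy_star, of n k m s n]
  by (simp only: avoid_heavy_star_last link_heavy_star_last[OF assms])

lemma compl_mem_heavy_star:
  assumes "n = 2*k" "k \<ge> 1" "k + s \<le> m" "A \<in> ksets {1..n} k" "s \<le> card (A \<inter> {1..m})"
    and "A \<notin> heavy_star n k m s"
  shows "{1..n} - A \<in> heavy_star n k m s"
proof -
  define C where "C = {1..n} - A"
  have A: "A \<subseteq> {1..n}" "card A = k" "finite A" using assms(4) by (auto simp: ksets_def intro: finite_subset)
  hence "1 \<notin> A" using assms(4-6) by (auto simp: heavy_star_def)
  have "s \<le> k" using assms(5) card_mono[OF \<open>finite A\<close>, of "A \<inter> {1..m}"] A by simp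
  have C: "C \<subseteq> {..n}" "card C = k" using A assms(1) by (auto simp: C_def card_Diff_subset)
  have "card C - (n - m) \<le> card (C \<inter> {..m})" by (rule card_inter_atMost_ge[OF C(1)])
  also have "C \<inter> {..m} = C \<inter> {1..m}" by (auto simp: C_def)
  finally have "s \<le> card (C \<inter> {1..m})" using C(2) \<open>s \<le> k\<close> assms(1,3) by linarith
  moreover have "1 \<in> C" "C \<subseteq> {1..n}" using \<open>1 \<notin> A\<close> assms(1,2) by (auto simp: C_def)
  ultimately show ?thesis using C(2) by (simp add: heavy_star_def ksets_def C_def)
qed

lemma card_le_heavy_star:
  assumes "2*k \<le> n" "k + s \<le> m" "F \<subseteq> ksets {1..n} k" "intersecting F" "shift_closed n k F"
    and "\<forall>A\<in>F. s \<le> card (A \<inter> {1..m})"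
  shows "card F \<le> card (heavy_star n k m s)"
  using assms
proof (induction n arbitrary: k s F rule: less_induct)
  case (less n)
  consider "k = 0" | "k \<ge> 1" "n = 2*k" | "k \<ge> 1" "2*k < n" using less.prems(1) by linarith
  then show ?case
  proof cases
    case 1
    hence "F = {}" using intersecting_ksets_0_eq_empty less.prems(3,4) by blast
    thus ?thesis by simp
  next
    case 2
    have "F \<subseteq> Pow {1..n}" using less.prems(3) by (auto simp: ksets_def)
    thus ?thesis using compl_mem_heavy_star[OF 2(2,1) less.prems(2)] less.prems(3,6)
      by (intro card_le_by_complement[OF finite_heavy_star less.prems(4)]) blast+
  next
    case 3
    define s' where "s' = (if n \<le> m then s - 1 else s)"
    have fin: "\<forall>A\<in>F. finite A \<and> s \<le> card (A \<inter> {1..m})"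
      using less.prems(3,6) finite_of_ksets by blast
    have "card (avoid F n) \<le> card (heavy_star (n-1) k m s)"
      using less.IH[of "n-1" k s "avoid F n"] 3 less.prems
        avoid_last_subset_ksets intersecting_avoid shift_closed_avoid_last
      by (auto simp: avoid_def)
    moreover have "card (link F n) \<le> card (heavy_star (n-1) (k-1) m s')"
    proof (rule less.IH)
      show "\<forall>B\<in>link F n. s' \<le> card (B \<inter> {1..m})"
        using card_inter_link_ge[OF fin] 3 by (auto simp: s'_def)
    qed (use 3 less.prems link_last_subset_ksets intersecting_link_last shift_closed_link_last
      in \<open>auto simp: s'_def\<close>)
    moreover have "card F = card (avoid F n) + card (link F n)"
      using less.prems(3) finite_ksets by (intro card_avoid_link) (rule finite_subset)
    ultimately show ?thesis using card_heavy_star_last[of n k m s] 3 by (simp add: s'_def)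
  qed
qed

lemma card_inter_atLeastAtMost_one:
  fixes K :: "nat set"
  assumes "finite K" "1 \<in> K" "m \<ge> 1"
  shows "card (K \<inter> {1..m}) = Suc (card (K \<inter> {2..m}))"
proof -
  have "K \<inter> {1..m} = insert 1 (K \<inter> {2..m})" using assms by auto
  thus ?thesis using assms(1) by simp
qed

lemma Kfam_eq_heavy_star_Un:
  assumes "s \<ge> 1" "k \<ge> 1"
  shows "Kfam n k s = heavy_star n k (k+s-1) s \<union> ksets {2..k+s-1} k"
proof -
  have "{K \<in> ksets {1..n} k. 1 \<in> K \<and> s - 1 \<le> card (K \<inter> {2..k+s-1})} = heavy_star n k (k+s-1) s"
    unfolding heavy_star_def
  proof (rule Collect_cong)
    fix K
    show "(K \<in> ksets {1..n} k \<and> 1 \<in> K \<and> s - 1 \<le> card (K \<inter> {2..k+s-1}))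
      \<longleftrightarrow> (K \<in> ksets {1..n} k \<and> 1 \<in> K \<and> s \<le> card (K \<inter> {1..k+s-1}))"
    proof (cases "K \<in> ksets {1..n} k \<and> 1 \<in> K")
      case True
      moreover have "finite K" using True finite_of_ksets by blast
      ultimately have "card (K \<inter> {1..k+s-1}) = Suc (card (K \<inter> {2..k+s-1}))"
        using card_inter_atLeastAtMost_one[of K "k+s-1"] assms by simp
      thus ?thesis using True assms(1) by auto
    qed auto
  qed
  thus ?thesis unfolding Kfam_def by simp
qed

lemma card_Kfam:
  assumes "s \<ge> 1" "k \<ge> 1"
  shows "card (Kfam n k s) = card (heavy_star n k (k+s-1) s) + card (ksets {2..k+s-1} k)"
proof -
  have "heavy_star n k (k+s-1) s \<inter> ksets {2..k+s-1} k = {}" by (auto simp: heavy_star_def ksets_def)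
  thus ?thesis unfolding Kfam_eq_heavy_star_Un[OF assms]
    by (intro card_Un_disjoint finite_heavy_star finite_ksets)
qed

lemma card_Kfam_last:
  assumes "k + s \<le> n" "s \<ge> 1" "k \<ge> 1"
  shows "card (Kfam n k s) = card (Kfam (n-1) k s) + card (heavy_star (n-1) (k-1) (k+s-1) s)"
  using card_Kfam[OF assms(2,3)] card_heavy_star_last[of n k "k+s-1" s] assms by simp

lemma compl_mem_Kfam:
  assumes "n = 2*k" "1 \<le> s" "s \<le> k" "A \<in> ksets {1..n} k" "s \<le> card (A \<inter> {1..k+s-1})"
    and "A \<notin> Kfam n k s"
  shows "{1..n} - A \<in> Kfam n k s"
proof -
  define m where "m = k+s-1"
  have K: "Kfam n k s = heavy_star n k m s \<union> ksets {2..m} k"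
    using Kfam_eq_heavy_star_Un assms(2,3) by (simp add: m_def)
  have A: "A \<subseteq> {1..n}" "card A = k" "finite A" using assms(4) by (auto simp: ksets_def intro: finite_subset)
  have "1 \<notin> A" using assms(4-6) K by (auto simp: heavy_star_def m_def)
  moreover have "\<not> A \<subseteq> {2..m}" using assms(6) A K by (auto simp: ksets_def)
  ultimately have "\<not> A \<subseteq> {1..m}"
  proof (intro notI)
    assume "A \<subseteq> {1..m}"
    have "A \<subseteq> {2..m}"
    proof
      fix x assume "x \<in> A"
      hence "x \<in> {1..m}" "x \<noteq> 1" using \<open>A \<subseteq> {1..m}\<close> \<open>1 \<notin> A\<close> by auto
      thus "x \<in> {2..m}" by auto
    qed
    thus False using \<open>\<not> A \<subseteq> {2..m}\<close> by blast
  qed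
  hence "card (A \<inter> {1..m}) < k" using psubset_card_mono[OF \<open>finite A\<close>, of "A \<inter> {1..m}"] A by auto
  define C where "C = {1..n} - A"
  have "C \<inter> {1..m} = {1..m} - A \<inter> {1..m}" using assms(1,3) by (auto simp: C_def m_def)
  hence "s \<le> card (C \<inter> {1..m})" using \<open>card (A \<inter> {1..m}) < k\<close>
    by (simp add: card_Diff_subset m_def)
  moreover have "1 \<in> C" "card C = k" using \<open>1 \<notin> A\<close> A assms(1-3) by (auto simp: C_def card_Diff_subset)
  ultimately have "C \<in> heavy_star n k m s" by (auto simp: heavy_star_def ksets_def C_def)
  thus ?thesis using K by (simp add: C_def)
qed

lemma card_le_Kfam:
  assumes "2*k \<le> n" "1 \<le> s" "s \<le> k" "F \<subseteq> ksets {1..n} k" "intersecting F" "shift_closed n k F"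
    and "\<forall>A\<in>F. s \<le> card (A \<inter> {1..k+s-1})"
  shows "card F \<le> card (Kfam n k s)"
  using assms
proof (induction n arbitrary: F rule: less_induct)
  case (less n)
  show ?case
  proof (cases "n = 2*k")
    case True
    have "F \<subseteq> Pow {1..n}" using less.prems(4) by (auto simp: ksets_def)
    moreover have "finite (Kfam n k s)"
      unfolding Kfam_eq_heavy_star_Un[OF less.prems(2) order_trans[OF less.prems(2,3)]]
      by (intro finite_UnI finite_heavy_star finite_ksets)
    ultimately show ?thesis using compl_mem_Kfam[OF True less.prems(2,3)] less.prems(4,7)
      by (intro card_le_by_complement[OF _ less.prems(5)]) blast+
  next
    case False
    hence n: "2*k < n" "k \<ge> 1" using less.prems(1-3) by simp_all
    have fin: "\<forall>A\<in>F. finite A \<and> s \<le> card (A \<inter> {1..k+s-1})"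
      using less.prems(4,7) finite_of_ksets by blast
    have "card (avoid F n) \<le> card (Kfam (n-1) k s)"
      using less.IH[of "n-1" "avoid F n"] n less.prems
        avoid_last_subset_ksets intersecting_avoid shift_closed_avoid_last
      by (auto simp: avoid_def)
    moreover have "card (link F n) \<le> card (heavy_star (n-1) (k-1) (k+s-1) s)"
    proof (rule card_le_heavy_star)
      have "1 \<le> n" "\<not> n \<le> k+s-1" using n less.prems(3) by auto
      thus "\<forall>B\<in>link F n. s \<le> card (B \<inter> {1..k+s-1})"
        using card_inter_link_ge[OF fin] by fastforce
    qed (use n less.prems link_last_subset_ksets intersecting_link_last shift_closed_link_last
      in auto)
    moreover have "card F = card (avoid F n) + card (link F n)"
      using less.prems(4) finite_ksets by (intro card_avoid_link) (rule finite_subset)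
    ultimately show ?thesis using card_Kfam_last[of k s n] n less.prems(2,3) by simp
  qed
qed

lemma tau_le_card:
  assumes "T \<subseteq> {1..n}" "\<forall>A\<in>F. T \<inter> A \<noteq> {}"
  shows "tau n F \<le> card T"
  unfolding tau_def using assms by (intro cInf_lower) auto

lemma le_tau:
  assumes "\<And>T. T \<subseteq> {1..n} \<Longrightarrow> \<forall>A\<in>F. T \<inter> A \<noteq> {} \<Longrightarrow> s \<le> card T"
    and "\<forall>A\<in>F. A \<subseteq> {1..n} \<and> A \<noteq> {}"
  shows "s \<le> tau n F"
  unfolding tau_def
proof (rule cInf_greatest)
  show "{card T |T. T \<subseteq> {1..n} \<and> (\<forall>A\<in>F. T \<inter> A \<noteq> {})} \<noteq> {}"
    using assms(2) by (auto intro!: exI[where x="{1..n}"]) (metis Int_absorb1)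
qed (use assms(1) in auto)

text \<open>Some member avoids \<open>[1, s-1]\<close>, so the shift \<open>[s, k+s-1]\<close> of it is a member; a member
  meeting \<open>[1, k+s-1]\<close> in fewer than \<open>s\<close> points would miss a \<open>k\<close>-subset of that interval, which
  is a shift of \<open>[s, k+s-1]\<close>.\<close>
lemma card_inter_ge_if_tau_ge:
  assumes "2*k < n" "1 \<le> s" "s \<le> k" "F \<subseteq> ksets {1..n} k" "intersecting F" "shift_closed n k F"
    and "s \<le> tau n F"
  shows "\<forall>C\<in>F. s \<le> card (C \<inter> {1..k+s-1})"
proof -
  define m where "m = k+s-1"
  have "m < n" "card {s..m} = k" using assms(1-3) by (simp_all add: m_def)
  obtain A where A: "A \<in> F" "{1..s-1} \<inter> A = {}"
  proof (rule ccontr)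
    assume "\<not> thesis"
    hence "tau n F \<le> card {1..s-1}" using that assms(1,3) by (intro tau_le_card) auto
    thus False using assms(2,7) by simp
  qed
  have Ak: "A \<subseteq> {1..n}" "card A = k" "finite A"
    using A(1) assms(4) by (auto simp: ksets_def intro: finite_subset)
  have "A \<subseteq> {s..}"
  proof
    fix x assume "x \<in> A"
    hence "x \<in> {1..n}" "x \<notin> {1..s-1}" using Ak(1) A(2) by auto
    thus "x \<in> {s..}" by auto
  qed
  hence "shift_below {s..m} A" using Ak \<open>card {s..m} = k\<close> by (intro shift_below_interval_left) simp_all
  moreover have "{s..m} \<in> ksets {1..n} k" using \<open>m < n\<close> \<open>card {s..m} = k\<close> assms(2) by (auto simp: ksets_def)
  ultimately have interval: "{s..m} \<in> F" using assms(6) A(1) by (auto simp: shift_closed_def)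
  show ?thesis unfolding m_def[symmetric]
  proof (rule ballI, rule ccontr)
    fix C assume C: "C \<in> F" and "\<not> s \<le> card (C \<inter> {1..m})"
    hence "k \<le> card ({1..m} - C)"
      using card_Diff_subset_Int[of "{1..m}" C] by (simp add: Int_commute m_def)
    then obtain D where D: "D \<subseteq> {1..m} - C" "card D = k" by (meson obtain_subset_with_card_n)
    have "shift_below D {s..m}"
      using D \<open>card {s..m} = k\<close> by (intro shift_below_interval_right) auto
    moreover have "D \<in> ksets {1..n} k" using D \<open>m < n\<close> by (auto simp: ksets_def)
    ultimately have "D \<in> F" using assms(6) interval by (auto simp: shift_closed_def)
    moreover have "D \<inter> C = {}" using D by auto
    ultimately show False using C assms(5) by (auto simp: intersecting_def)
  qed
qed

lemma Kfam_subset_ksets: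
  assumes "k + s \<le> Suc n" "1 \<le> s" "s \<le> k"
  shows "Kfam n k s \<subseteq> ksets {1..n} k"
proof -
  have "{2..k+s-1} \<subseteq> {1..n}" using assms(1) by auto
  hence "ksets {2..k+s-1} k \<subseteq> ksets {1..n} k" unfolding ksets_def by blast
  thus ?thesis using Kfam_eq_heavy_star_Un[of s k n] assms(2,3) by (auto simp: heavy_star_def)
qed

lemma inter_nonempty_if_card_gt:
  fixes X Y Z :: "'a set"
  assumes "finite Z" "X \<subseteq> Z" "Y \<subseteq> Z" "card Z < card X + card Y"
  shows "X \<inter> Y \<noteq> {}"
proof
  assume "X \<inter> Y = {}"
  hence "card (X \<union> Y) = card X + card Y" using assms by (meson card_Un_disjoint finite_subset)
  moreover have "card (X \<union> Y) \<le> card Z" using assms by (intro card_mono) auto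
  ultimately show False using assms(4) by simp
qed

lemma intersecting_Kfam:
  assumes "1 \<le> s" "s \<le> k"
  shows "intersecting (Kfam n k s)"
proof -
  define m where "m = k+s-1"
  have meets: "A \<inter> B \<noteq> {}" if A: "A \<in> heavy_star n k m s" and B: "B \<in> ksets {2..m} k" for A B
  proof -
    have "finite A" "1 \<in> A" "s \<le> card (A \<inter> {1..m})"
      using A finite_of_ksets by (auto simp: heavy_star_def)
    hence "s - 1 \<le> card (A \<inter> {2..m})"
      using card_inter_atLeastAtMost_one[of A m] assms by (simp add: m_def)
    hence "(A \<inter> {2..m}) \<inter> B \<noteq> {}"
      using B assms by (intro inter_nonempty_if_card_gt[of "{2..m}"]) (auto simp: ksets_def m_def)
    thus ?thesis by auto
  qed
  have within: "A \<inter> B \<noteq> {}" if "A \<in> ksets {2..m} k" "B \<in> ksets {2..m} k" for A B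
    using that assms by (intro inter_nonempty_if_card_gt[of "{2..m}"]) (auto simp: ksets_def m_def)
  show ?thesis
    unfolding intersecting_def Kfam_eq_heavy_star_Un[OF assms(1) order_trans[OF assms]] m_def[symmetric]
  proof (intro ballI)
    fix A B assume "A \<in> heavy_star n k m s \<union> ksets {2..m} k" "B \<in> heavy_star n k m s \<union> ksets {2..m} k"
    thus "A \<inter> B \<noteq> {}"
      using within[of A B] meets[of A B] meets[of B A] by (auto simp: heavy_star_def Int_commute)
  qed
qed

lemma shift_closed_Kfam:
  assumes "k + s \<le> Suc n" "1 \<le> s" "s \<le> k"
  shows "shift_closed n k (Kfam n k s)"
  unfolding shift_closed_def
proof (intro ballI impI)
  define m where "m = k+s-1"
  have K: "Kfam n k s = heavy_star n k m s \<union> ksets {2..m} k"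
    using Kfam_eq_heavy_star_Un assms(2,3) by (simp add: m_def)
  fix A B assume A: "A \<in> ksets {1..n} k" and B: "B \<in> Kfam n k s" and "shift_below A B"
  have An: "A \<subseteq> {1..n}" "card A = k" "finite A" using A by (auto simp: ksets_def intro: finite_subset)
  have Bn: "B \<subseteq> {1..n}" using B Kfam_subset_ksets[OF assms] by (auto simp: ksets_def)
  have count: "card (B \<inter> {..t}) \<le> card (A \<inter> {..t})" for t
    using \<open>shift_below A B\<close> by (simp add: shift_below_def)
  have restrict: "X \<inter> {..t} = X \<inter> {1..t}" if "X \<subseteq> {1..n}" for X t using that by auto
  show "A \<in> Kfam n k s"
  proof (cases "B \<in> heavy_star n k m s")
    case True
    have "B \<inter> {..1} = {1}" using True Bn by (auto simp: heavy_star_def)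
    hence "A \<inter> {..1} \<noteq> {}" using count[of 1] by (auto simp del: Int_atMost)
    hence "1 \<in> A" using An(1) by auto
    moreover have "s \<le> card (A \<inter> {1..m})"
      using True count[of m] restrict[OF Bn] restrict[OF An(1)] by (auto simp: heavy_star_def)
    ultimately show ?thesis using A K by (simp add: heavy_star_def)
  next
    case False
    hence B2: "B \<subseteq> {2..m}" "card B = k" using B K by (auto simp: ksets_def)
    moreover have "B \<inter> {..m} = B" using B2(1) by auto
    ultimately have "k \<le> card (A \<inter> {..m})" using count[of m] by simp
    hence "A \<subseteq> {..m}" using An by (metis Int_lower1 card_seteq finite_Int inf.absorb_iff1)
    hence Am: "A \<subseteq> {1..m}" using An(1) by (auto simp: subset_iff)
    show ?thesis
    proof (cases "1 \<in> A")
      case True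
      hence "A \<in> heavy_star n k m s" using A Am An(2) assms(3) by (simp add: heavy_star_def Int_absorb2)
      thus ?thesis using K by simp
    next
      case False
      have "A \<subseteq> {2..m}"
      proof
        fix x assume "x \<in> A"
        hence "x \<in> {1..m}" "x \<noteq> 1" using Am False by auto
        thus "x \<in> {2..m}" by auto
      qed
      thus ?thesis using K An(2) by (simp add: ksets_def)
    qed
  qed
qed

lemma tau_Kfam_ge:
  assumes "k + s \<le> Suc n" "1 \<le> s" "s \<le> k"
  shows "s \<le> tau n (Kfam n k s)"
proof (rule le_tau)
  define m where "m = k+s-1"
  have K: "Kfam n k s = heavy_star n k m s \<union> ksets {2..m} k"
    using Kfam_eq_heavy_star_Un assms(2,3) by (simp add: m_def)
  have mn: "{1..m} \<subseteq> {1..n}" using assms by (auto simp: m_def)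
  show "\<forall>A\<in>Kfam n k s. A \<subseteq> {1..n} \<and> A \<noteq> {}"
    using Kfam_subset_ksets[OF assms] assms by (force simp: ksets_def)
  fix T assume T: "T \<subseteq> {1..n}" and hit: "\<forall>A\<in>Kfam n k s. T \<inter> A \<noteq> {}"
  show "s \<le> card T"
  proof (rule ccontr)
    assume "\<not> s \<le> card T"
    have fT: "finite T" using T finite_subset by blast
    have free: "card ({2..m} - T) = k + s - 2 - card ({2..m} \<inter> T)"
      using card_Diff_subset_Int[of "{2..m}" T] by (simp add: m_def)
    show False
    proof (cases "1 \<in> T")
      case False
      have "card ({2..m} \<inter> T) \<le> card T" using fT by (intro card_mono) auto
      hence "k - 1 \<le> card ({2..m} - T)" using free \<open>\<not> s \<le> card T\<close> by linarith
      then obtain X where X: "X \<subseteq> {2..m} - T" "card X = k - 1" by (meson obtain_subset_with_card_n)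
      have "finite X" "1 \<notin> X" using X(1) finite_subset by auto
      hence card1: "card (insert 1 X) = k" using X(2) assms by simp
      have "insert 1 X \<subseteq> {1..m}" using X(1) assms by (auto simp: m_def)
      hence "insert 1 X \<subseteq> {1..n}" "insert 1 X \<inter> {1..m} = insert 1 X" using mn by blast+
      hence "insert 1 X \<in> heavy_star n k m s" using card1 assms(3) by (simp add: heavy_star_def ksets_def)
      moreover have "T \<inter> insert 1 X = {}" using X False by auto
      ultimately show False using hit K by blast
    next
      case True
      have "{2..m} \<inter> T \<subseteq> T - {1}" by auto
      hence "card ({2..m} \<inter> T) \<le> card T - 1" using fT True card_mono[of "T - {1}"] by simp
      moreover have "card T \<ge> 1" using True fT by (simp add: Suc_le_eq card_gt_0_iff) blast
      ultimately have "k \<le> card ({2..m} - T)" using free \<open>\<not> s \<le> card T\<close> by linarith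
      then obtain X where X: "X \<subseteq> {2..m} - T" "card X = k" by (meson obtain_subset_with_card_n)
      hence "X \<in> ksets {2..m} k" by (auto simp: ksets_def)
      moreover have "T \<inter> X = {}" using X by auto
      ultimately show False using hit K by blast
    qed
  qed
qed

theorem mainTheorem19:
  fixes n k s :: nat
  assumes "n > 2 * k" and "1 \<le> s" and "s \<le> k"
  shows "g n k s = card (Kfam n k s)"
proof -
  have ks: "k + s \<le> Suc n" using assms by simp
  let ?S = "{card F | F. F \<subseteq> ksets {1..n} k \<and> intersecting F \<and> initial n k F \<and> tau n F \<ge> s}"
  have "card (Kfam n k s) \<in> ?S"
    using Kfam_subset_ksets[OF ks assms(2,3)] intersecting_Kfam[OF assms(2,3)]
      initial_iff_shift_closed shift_closed_Kfam[OF ks assms(2,3)] tau_Kfam_ge[OF ks assms(2,3)]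
    by blast
  moreover have "x \<le> card (Kfam n k s)" if x: "x \<in> ?S" for x
  proof -
    obtain F where F: "x = card F" "F \<subseteq> ksets {1..n} k" "intersecting F" "initial n k F" "s \<le> tau n F"
      using x by blast
    hence "shift_closed n k F" using initial_iff_shift_closed by blast
    thus ?thesis using card_le_Kfam card_inter_ge_if_tau_ge[OF assms F(2,3) _ F(5)] F(1-3) assms
      by simp
  qed
  moreover have "finite (card ` Pow (ksets {1..n} k))" using finite_ksets by blast
  hence "finite ?S" by (rule finite_subset[rotated]) auto
  ultimately show ?thesis unfolding g_def by (intro Max_eqI) auto
qed

end
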